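(* Let $\mathbb G$ be a special 2-group, $(n,\rho,\beta,c)$ and $(n',\rho',\beta',c')$ admissible quadruples, and $\mathcal O\subseteq M(n',n)$ an intertwining $\pi_0(\mathbb G)$-orbit. Then $z_{\mathcal O}\in Z^2(\pi_0(\mathbb G),\mathcal F(\mathcal O,\mathbb C^* )_{\rho,\rho'})$. Moreover, if $c$ and $c'$ are replaced by $\tilde c=c\,\partial x$ and $\tilde c'=c'\,\partial x'$ for normalized 1-cochains $x,x'$ (so that $\tilde c,\tilde c'$ have the same classes as $c,c'$ modulo coboundaries), the resulting cocycle $\tilde z_{\mathcal O}$ is cohomologous to $z_{\mathcal O}$; thus the cohomology class of $z_{\mathcal O}$ depends only on the classes of $c$ and $c'$ modulo coboundaries.
   Context: $\mathbb G$ special 2-group: skeletal monoidal groupoid with strictly invertible objects and trivial unit constraints; objects form the group $\pi_0(\mathbb G)$, $\pi_1(\mathbb G)=\mathrm{Aut}(e)$ is a $\pi_0(\mathbb G)$-module via $g\cdot u=\gamma_g^{-1}(\delta_g(u))$ ($\gamma_g(u)=u\otimes\mathrm{id}_g$, $\delta_g(u)=\mathrm{id}_g\otimes u$), canonical classifying 3-cocycle $\alpha(g_1,g_2,g_3)=\gamma^{-1}_{g_1g_2g_3}(a_{g_1,g_2,g_3})$. $S_n$ acts on $(\mathbb C^* )^n$ by $(\sigma\cdot\boldsymbol\lambda)_i=\lambda_{\sigma^{-1}(i)}$; $(\mathbb C^* )^n_\rho$ has $\pi_0(\mathbb G)$ acting through $\rho$. An admissible quadruple $(n,\rho,\beta,c)$: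 $n\ge1$, $\rho:\pi_0(\mathbb G)\to S_n$ a homomorphism, $\beta:\pi_1(\mathbb G)\to(\mathbb C^* )^n_\rho$ a module homomorphism with $[\beta\circ\alpha]=0$ in $H^3$, $c$ a normalized 2-cochain with values in $(\mathbb C^* )^n_\rho$ with $\partial c=\beta\circ\alpha$ (multiplicative notation, standard group-cochain coboundary). $M(n',n)=\{1,\dots,n'\}\times\{1,\dots,n\}$ with right action $(i',i)\cdot g=(\rho'(g)^{-1}(i'),\rho(g)^{-1}(i))$; $I(\beta,\beta')=\{(i',i):\beta'_{i'}=\beta_i\}$; an orbit $\mathcal O$ is intertwining if $\mathcal O\subseteq I(\beta,\beta')$. $\mathcal F(\mathcal O,\mathbb C^* )_{\rho,\rho'}$ is the multiplicative group of functions $\lambda:\mathcal O\to\mathbb C^*$ with $\pi_0(\mathbb G)$-module structure $(g\cdot\lambda)(p)=\lambda(p\cdot g)$. $z_{\mathcal O}(g_1,g_2)(i',i)=c'(g_1,g_2)_{i'}/c(g_1,g_2)_i$ for $(i',i)\in\mathcal O$. *)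

theory Defs
  imports "HOL-Algebra.Group" "HOL-Combinatorics.Permutations" Complex_Main
begin

text \<open>Since the groupoid is skeletal, the only
morphisms are automorphisms; Aut g is the set of automorphisms of the object g
(the sets for distinct objects are disjoint).  cmp is composition (cmp u v = u after v),
idm g the identity of g, tns the tensor product on morphisms, asc g1 g2 g3 the associator
(g1 g2) g3 to g1 (g2 g3) (objects multiply strictly associatively), unit constraints trivial.\<close>

record ('g, 'm) two_group =
  obj :: "'g monoid"
  Aut :: "'g \<Rightarrow> 'm set"
  cmp :: "'m \<Rightarrow> 'm \<Rightarrow> 'm"
  idm :: "'g \<Rightarrow> 'm"
  tns :: "'m \<Rightarrow> 'm \<Rightarrow> 'm"
  asc :: "'g \<Rightarrow> 'g \<Rightarrow> 'g \<Rightarrow> 'm"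

definition special_2group :: "('g, 'm) two_group \<Rightarrow> bool" where
  "special_2group GG \<longleftrightarrow>
     (let G = obj GG; e = \<one>\<^bsub>G\<^esub> in
      group G \<and>
      (\<forall>g\<in>carrier G. group \<lparr>carrier = Aut GG g, monoid.mult = cmp GG, one = idm GG g\<rparr>) \<and>
      (\<forall>g\<in>carrier G. \<forall>h\<in>carrier G. g \<noteq> h \<longrightarrow> Aut GG g \<inter> Aut GG h = {}) \<and>
      \<comment> \<open>tensor product is a bifunctor\<close>
      (\<forall>g\<in>carrier G. \<forall>h\<in>carrier G. \<forall>u\<in>Aut GG g. \<forall>v\<in>Aut GG h.
          tns GG u v \<in> Aut GG (g \<otimes>\<^bsub>G\<^esub> h)) \<and>
      (\<forall>g\<in>carrier G. \<forall>h\<in>carrier G.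
          tns GG (idm GG g) (idm GG h) = idm GG (g \<otimes>\<^bsub>G\<^esub> h)) \<and>
      (\<forall>g\<in>carrier G. \<forall>h\<in>carrier G. \<forall>u\<in>Aut GG g. \<forall>u'\<in>Aut GG g. \<forall>v\<in>Aut GG h. \<forall>v'\<in>Aut GG h.
          tns GG (cmp GG u u') (cmp GG v v') = cmp GG (tns GG u v) (tns GG u' v')) \<and>
      \<comment> \<open>associator: components and naturality\<close>
      (\<forall>g1\<in>carrier G. \<forall>g2\<in>carrier G. \<forall>g3\<in>carrier G.
          asc GG g1 g2 g3 \<in> Aut GG (g1 \<otimes>\<^bsub>G\<^esub> g2 \<otimes>\<^bsub>G\<^esub> g3)) \<and>
      (\<forall>g1\<in>carrier G. \<forall>g2\<in>carrier G. \<forall>g3\<in>carrier G.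
        \<forall>u1\<in>Aut GG g1. \<forall>u2\<in>Aut GG g2. \<forall>u3\<in>Aut GG g3.
          cmp GG (asc GG g1 g2 g3) (tns GG (tns GG u1 u2) u3)
          = cmp GG (tns GG u1 (tns GG u2 u3)) (asc GG g1 g2 g3)) \<and>
      \<comment> \<open>pentagon\<close>
      (\<forall>g1\<in>carrier G. \<forall>g2\<in>carrier G. \<forall>g3\<in>carrier G. \<forall>g4\<in>carrier G.
          cmp GG (asc GG g1 g2 (g3 \<otimes>\<^bsub>G\<^esub> g4)) (asc GG (g1 \<otimes>\<^bsub>G\<^esub> g2) g3 g4)
          = cmp GG (tns GG (idm GG g1) (asc GG g2 g3 g4))
              (cmp GG (asc GG g1 (g2 \<otimes>\<^bsub>G\<^esub> g3) g4) (tns GG (asc GG g1 g2 g3) (idm GG g4)))) \<and>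
      \<comment> \<open>trivial unit constraints (identity unitors are natural; triangle axiom)\<close>
      (\<forall>g\<in>carrier G. \<forall>u\<in>Aut GG g. tns GG (idm GG e) u = u \<and> tns GG u (idm GG e) = u) \<and>
      (\<forall>g\<in>carrier G. \<forall>h\<in>carrier G. asc GG g e h = idm GG (g \<otimes>\<^bsub>G\<^esub> h)))"

abbreviation pi0 :: "('g, 'm) two_group \<Rightarrow> 'g monoid" where "pi0 GG \<equiv> obj GG"
abbreviation e2 :: "('g, 'm) two_group \<Rightarrow> 'g" where "e2 GG \<equiv> \<one>\<^bsub>obj GG\<^esub>"
abbreviation pi1 :: "('g, 'm) two_group \<Rightarrow> 'm set" where "pi1 GG \<equiv> Aut GG (e2 GG)"

definition gam :: "('g, 'm) two_group \<Rightarrow> 'g \<Rightarrow> 'm \<Rightarrow> 'm" where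
  "gam GG g u = tns GG u (idm GG g)"
definition del :: "('g, 'm) two_group \<Rightarrow> 'g \<Rightarrow> 'm \<Rightarrow> 'm" where
  "del GG g u = tns GG (idm GG g) u"
definition gam_inv :: "('g, 'm) two_group \<Rightarrow> 'g \<Rightarrow> 'm \<Rightarrow> 'm" where
  "gam_inv GG g = the_inv_into (pi1 GG) (gam GG g)"

text \<open>The pi_0-module structure on pi_1 and the canonical classifying 3-cocycle.\<close>
definition act1 :: "('g, 'm) two_group \<Rightarrow> 'g \<Rightarrow> 'm \<Rightarrow> 'm" where
  "act1 GG g u = gam_inv GG g (del GG g u)"
definition alpha :: "('g, 'm) two_group \<Rightarrow> 'g \<Rightarrow> 'g \<Rightarrow> 'g \<Rightarrow> 'm" where
  "alpha GG g1 g2 g3 =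
     gam_inv GG (g1 \<otimes>\<^bsub>obj GG\<^esub> g2 \<otimes>\<^bsub>obj GG\<^esub> g3) (asc GG g1 g2 g3)"

text \<open>A module of the form (functions X \<rightarrow> C*) with a pi_0-action act.  Elements are
represented as functions 'x \<Rightarrow> complex, compared only on X.\<close>

definition units_on :: "'x set \<Rightarrow> ('x \<Rightarrow> complex) \<Rightarrow> bool" where
  "units_on X f \<longleftrightarrow> (\<forall>x\<in>X. f x \<noteq> 0)"

definition eq_on :: "'x set \<Rightarrow> ('x \<Rightarrow> complex) \<Rightarrow> ('x \<Rightarrow> complex) \<Rightarrow> bool" where
  "eq_on X f h \<longleftrightarrow> (\<forall>x\<in>X. f x = h x)"

definition cob1 :: "'g monoid \<Rightarrow> ('g \<Rightarrow> ('x \<Rightarrow> complex) \<Rightarrow> ('x \<Rightarrow> complex))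
    \<Rightarrow> ('g \<Rightarrow> 'x \<Rightarrow> complex) \<Rightarrow> 'g \<Rightarrow> 'g \<Rightarrow> 'x \<Rightarrow> complex" where
  "cob1 G act y g1 g2 = (\<lambda>x. act g1 (y g2) x * y g1 x / y (g1 \<otimes>\<^bsub>G\<^esub> g2) x)"

definition cob2 :: "'g monoid \<Rightarrow> ('g \<Rightarrow> ('x \<Rightarrow> complex) \<Rightarrow> ('x \<Rightarrow> complex))
    \<Rightarrow> ('g \<Rightarrow> 'g \<Rightarrow> 'x \<Rightarrow> complex) \<Rightarrow> 'g \<Rightarrow> 'g \<Rightarrow> 'g \<Rightarrow> 'x \<Rightarrow> complex" where
  "cob2 G act c g1 g2 g3 = (\<lambda>x. act g1 (c g2 g3) x * c g1 (g2 \<otimes>\<^bsub>G\<^esub> g3) x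
                                  / (c (g1 \<otimes>\<^bsub>G\<^esub> g2) g3 x * c g1 g2 x))"

definition cochain1 :: "'g monoid \<Rightarrow> 'x set \<Rightarrow> ('g \<Rightarrow> 'x \<Rightarrow> complex) \<Rightarrow> bool" where
  "cochain1 G X y \<longleftrightarrow> (\<forall>g\<in>carrier G. units_on X (y g))"

definition normalized_cochain1 :: "'g monoid \<Rightarrow> 'x set \<Rightarrow> ('g \<Rightarrow> 'x \<Rightarrow> complex) \<Rightarrow> bool" where
  "normalized_cochain1 G X y \<longleftrightarrow> cochain1 G X y \<and> eq_on X (y \<one>\<^bsub>G\<^esub>) (\<lambda>_. 1)"

definition cochain2 :: "'g monoid \<Rightarrow> 'x set \<Rightarrow> ('g \<Rightarrow> 'g \<Rightarrow> 'x \<Rightarrow> complex) \<Rightarrow> bool" where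
  "cochain2 G X c \<longleftrightarrow> (\<forall>g1\<in>carrier G. \<forall>g2\<in>carrier G. units_on X (c g1 g2))"

definition normalized_cochain2 :: "'g monoid \<Rightarrow> 'x set \<Rightarrow> ('g \<Rightarrow> 'g \<Rightarrow> 'x \<Rightarrow> complex) \<Rightarrow> bool" where
  "normalized_cochain2 G X c \<longleftrightarrow> cochain2 G X c \<and>
     (\<forall>g\<in>carrier G. eq_on X (c \<one>\<^bsub>G\<^esub> g) (\<lambda>_. 1) \<and> eq_on X (c g \<one>\<^bsub>G\<^esub>) (\<lambda>_. 1))"

definition Z2 :: "'g monoid \<Rightarrow> 'x set \<Rightarrow> ('g \<Rightarrow> ('x \<Rightarrow> complex) \<Rightarrow> ('x \<Rightarrow> complex))
    \<Rightarrow> ('g \<Rightarrow> 'g \<Rightarrow> 'x \<Rightarrow> complex) set" where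
  "Z2 G X act = {z. cochain2 G X z \<and>
     (\<forall>g1\<in>carrier G. \<forall>g2\<in>carrier G. \<forall>g3\<in>carrier G. eq_on X (cob2 G act z g1 g2 g3) (\<lambda>_. 1))}"

definition cohomologous2 :: "'g monoid \<Rightarrow> 'x set \<Rightarrow> ('g \<Rightarrow> ('x \<Rightarrow> complex) \<Rightarrow> ('x \<Rightarrow> complex))
    \<Rightarrow> ('g \<Rightarrow> 'g \<Rightarrow> 'x \<Rightarrow> complex) \<Rightarrow> ('g \<Rightarrow> 'g \<Rightarrow> 'x \<Rightarrow> complex) \<Rightarrow> bool" where
  "cohomologous2 G X act z w \<longleftrightarrow> (\<exists>y. cochain1 G X y \<and>
     (\<forall>g1\<in>carrier G. \<forall>g2\<in>carrier G.
        eq_on X (w g1 g2) (\<lambda>x. z g1 g2 x * cob1 G act y g1 g2 x)))"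

definition vact :: "('g \<Rightarrow> nat \<Rightarrow> nat) \<Rightarrow> 'g \<Rightarrow> (nat \<Rightarrow> complex) \<Rightarrow> nat \<Rightarrow> complex" where
  "vact \<rho> g l = (\<lambda>i. l (Hilbert_Choice.inv (\<rho> g) i))"

definition perm_rep :: "'g monoid \<Rightarrow> nat \<Rightarrow> ('g \<Rightarrow> nat \<Rightarrow> nat) \<Rightarrow> bool" where
  "perm_rep G n \<rho> \<longleftrightarrow> (\<forall>g\<in>carrier G. \<rho> g permutes {1..n}) \<and>
     (\<forall>g\<in>carrier G. \<forall>h\<in>carrier G. \<rho> (g \<otimes>\<^bsub>G\<^esub> h) = \<rho> g \<circ> \<rho> h)"

definition module_hom :: "('g, 'm) two_group \<Rightarrow> nat \<Rightarrow> ('g \<Rightarrow> nat \<Rightarrow> nat)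
    \<Rightarrow> ('m \<Rightarrow> nat \<Rightarrow> complex) \<Rightarrow> bool" where
  "module_hom GG n \<rho> \<beta> \<longleftrightarrow>
     (\<forall>u\<in>pi1 GG. units_on {1..n} (\<beta> u)) \<and>
     (\<forall>u\<in>pi1 GG. \<forall>v\<in>pi1 GG. eq_on {1..n} (\<beta> (cmp GG u v)) (\<lambda>i. \<beta> u i * \<beta> v i)) \<and>
     (\<forall>g\<in>carrier (pi0 GG). \<forall>u\<in>pi1 GG. eq_on {1..n} (\<beta> (act1 GG g u)) (vact \<rho> g (\<beta> u)))"

definition admissible :: "('g, 'm) two_group \<Rightarrow> nat \<Rightarrow> ('g \<Rightarrow> nat \<Rightarrow> nat)
    \<Rightarrow> ('m \<Rightarrow> nat \<Rightarrow> complex) \<Rightarrow> ('g \<Rightarrow> 'g \<Rightarrow> nat \<Rightarrow> complex) \<Rightarrow> bool" where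
  "admissible GG n \<rho> \<beta> c \<longleftrightarrow>
     n \<ge> 1 \<and> perm_rep (pi0 GG) n \<rho> \<and> module_hom GG n \<rho> \<beta> \<and>
     \<comment> \<open>[beta o alpha] = 0 in H^3\<close>
     (\<exists>c0. cochain2 (pi0 GG) {1..n} c0 \<and>
        (\<forall>g1\<in>carrier (pi0 GG). \<forall>g2\<in>carrier (pi0 GG). \<forall>g3\<in>carrier (pi0 GG).
           eq_on {1..n} (cob2 (pi0 GG) (vact \<rho>) c0 g1 g2 g3) (\<beta> (alpha GG g1 g2 g3)))) \<and>
     normalized_cochain2 (pi0 GG) {1..n} c \<and>
     (\<forall>g1\<in>carrier (pi0 GG). \<forall>g2\<in>carrier (pi0 GG). \<forall>g3\<in>carrier (pi0 GG).
        eq_on {1..n} (cob2 (pi0 GG) (vact \<rho>) c g1 g2 g3) (\<beta> (alpha GG g1 g2 g3)))"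

definition Mset :: "nat \<Rightarrow> nat \<Rightarrow> (nat \<times> nat) set" where
  "Mset n' n = {1..n'} \<times> {1..n}"

definition ract :: "('g \<Rightarrow> nat \<Rightarrow> nat) \<Rightarrow> ('g \<Rightarrow> nat \<Rightarrow> nat) \<Rightarrow> nat \<times> nat \<Rightarrow> 'g \<Rightarrow> nat \<times> nat" where
  "ract \<rho> \<rho>' p g = (Hilbert_Choice.inv (\<rho>' g) (fst p), Hilbert_Choice.inv (\<rho> g) (snd p))"

definition is_orbit :: "'g monoid \<Rightarrow> nat \<Rightarrow> nat \<Rightarrow> ('g \<Rightarrow> nat \<Rightarrow> nat) \<Rightarrow> ('g \<Rightarrow> nat \<Rightarrow> nat)
    \<Rightarrow> (nat \<times> nat) set \<Rightarrow> bool" where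
  "is_orbit G n' n \<rho> \<rho>' Orb \<longleftrightarrow> (\<exists>p\<in>Mset n' n. Orb = (\<lambda>g. ract \<rho> \<rho>' p g) ` carrier G)"

definition Iset :: "('g, 'm) two_group \<Rightarrow> nat \<Rightarrow> nat \<Rightarrow> ('m \<Rightarrow> nat \<Rightarrow> complex)
    \<Rightarrow> ('m \<Rightarrow> nat \<Rightarrow> complex) \<Rightarrow> (nat \<times> nat) set" where
  "Iset GG n' n \<beta> \<beta>' = {(i', i) \<in> Mset n' n. (\<lambda>u\<in>pi1 GG. \<beta>' u i') = (\<lambda>u\<in>pi1 GG. \<beta> u i)}"

definition orbit_act :: "('g \<Rightarrow> nat \<Rightarrow> nat) \<Rightarrow> ('g \<Rightarrow> nat \<Rightarrow> nat) \<Rightarrow> 'g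
    \<Rightarrow> (nat \<times> nat \<Rightarrow> complex) \<Rightarrow> nat \<times> nat \<Rightarrow> complex" where
  "orbit_act \<rho> \<rho>' g l = (\<lambda>p. l (ract \<rho> \<rho>' p g))"

definition zO :: "('g \<Rightarrow> 'g \<Rightarrow> nat \<Rightarrow> complex) \<Rightarrow> ('g \<Rightarrow> 'g \<Rightarrow> nat \<Rightarrow> complex)
    \<Rightarrow> 'g \<Rightarrow> 'g \<Rightarrow> nat \<times> nat \<Rightarrow> complex" where
  "zO c c' g1 g2 = (\<lambda>(i', i). c' g1 g2 i' / c g1 g2 i)"

end

(* The coboundary of z_O at (i', i) is the quotient (\<partial>c')_{i'} / (\<partial>c)_i, i.e.
   \<beta>'(\<alpha>)_{i'} / \<beta>(\<alpha>)_i, which is 1 on I(\<beta>, \<beta>') as soon as \<alpha> takes values in \<pi>_1.  The latter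
   holds because tensoring with id_g is a bijection Aut(x) \<rightarrow> Aut(x g): composing it with
   tensoring by id_{g^-1} gives conjugation by an associator (naturality).  Replacing c, c' by
   c \<partial>x, c' \<partial>x' does not change \<partial>c, \<partial>c' (since \<partial>\<partial> = 1) and multiplies z_O by the coboundary
   of (i', i) \<mapsto> x'_{i'} / x_i. *)

theory Submission
  imports Defs
begin

abbreviation aut_group :: "('g, 'm) two_group \<Rightarrow> 'g \<Rightarrow> 'm monoid" where
  "aut_group GG g \<equiv> \<lparr>carrier = Aut GG g, monoid.mult = cmp GG, one = idm GG g\<rparr>"

context
  fixes GG :: "('g, 'm) two_group"
  assumes special: "special_2group GG"
begin

lemma obj_group: "group (obj GG)"
  and aut_group_is_group: "g \<in> carrier (obj GG) \<Longrightarrow> group (aut_group GG g)"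
  and tns_closed: "\<lbrakk>g \<in> carrier (obj GG); h \<in> carrier (obj GG); u \<in> Aut GG g; v \<in> Aut GG h\<rbrakk>
      \<Longrightarrow> tns GG u v \<in> Aut GG (g \<otimes>\<^bsub>obj GG\<^esub> h)"
  and tns_idm: "\<lbrakk>g \<in> carrier (obj GG); h \<in> carrier (obj GG)\<rbrakk>
      \<Longrightarrow> tns GG (idm GG g) (idm GG h) = idm GG (g \<otimes>\<^bsub>obj GG\<^esub> h)"
  and asc_closed: "\<lbrakk>g1 \<in> carrier (obj GG); g2 \<in> carrier (obj GG); g3 \<in> carrier (obj GG)\<rbrakk>
      \<Longrightarrow> asc GG g1 g2 g3 \<in> Aut GG (g1 \<otimes>\<^bsub>obj GG\<^esub> g2 \<otimes>\<^bsub>obj GG\<^esub> g3)"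
  and asc_natural: "\<lbrakk>g1 \<in> carrier (obj GG); g2 \<in> carrier (obj GG); g3 \<in> carrier (obj GG);
        u1 \<in> Aut GG g1; u2 \<in> Aut GG g2; u3 \<in> Aut GG g3\<rbrakk>
      \<Longrightarrow> cmp GG (asc GG g1 g2 g3) (tns GG (tns GG u1 u2) u3)
          = cmp GG (tns GG u1 (tns GG u2 u3)) (asc GG g1 g2 g3)"
  and tns_idm_one: "\<lbrakk>g \<in> carrier (obj GG); u \<in> Aut GG g\<rbrakk> \<Longrightarrow> tns GG u (idm GG (e2 GG)) = u"
  by (use special[unfolded special_2group_def Let_def] in \<open>simp only: Let_def; blast\<close>)+

lemma idm_closed: "g \<in> carrier (obj GG) \<Longrightarrow> idm GG g \<in> Aut GG g"
  using group.is_monoid[OF aut_group_is_group] monoid.one_closed by fastforce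

lemma gam_closed:
  "\<lbrakk>x \<in> carrier (obj GG); g \<in> carrier (obj GG); w \<in> Aut GG x\<rbrakk>
    \<Longrightarrow> gam GG g w \<in> Aut GG (x \<otimes>\<^bsub>obj GG\<^esub> g)"
  unfolding gam_def by (simp add: tns_closed idm_closed)

lemma gam_one: "\<lbrakk>x \<in> carrier (obj GG); w \<in> Aut GG x\<rbrakk> \<Longrightarrow> gam GG (e2 GG) w = w"
  unfolding gam_def by (rule tns_idm_one)

lemma asc_conj_gam_gam:
  assumes x: "x \<in> carrier (obj GG)" and g: "g \<in> carrier (obj GG)" and h: "h \<in> carrier (obj GG)"
    and w: "w \<in> Aut GG x"
  shows "cmp GG (asc GG x g h) (gam GG h (gam GG g w))
    = cmp GG (gam GG (g \<otimes>\<^bsub>obj GG\<^esub> h) w) (asc GG x g h)"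
  using asc_natural[OF x g h w idm_closed[OF g] idm_closed[OF h]]
  unfolding gam_def by (simp add: tns_idm g h)

lemma gam_inj_on:
  assumes x: "x \<in> carrier (obj GG)" and g: "g \<in> carrier (obj GG)"
  shows "inj_on (gam GG g) (Aut GG x)"
proof (rule inj_onI)
  interpret G: group "obj GG" by (rule obj_group)
  interpret A: group "aut_group GG x" by (rule aut_group_is_group[OF x])
  define a where "a = asc GG x g (inv\<^bsub>obj GG\<^esub> g)"
  have a: "a \<in> Aut GG x"
    using asc_closed[OF x g G.inv_closed[OF g]] x g unfolding a_def by (simp add: G.m_assoc)
  have conj: "cmp GG a (gam GG (inv\<^bsub>obj GG\<^esub> g) (gam GG g w)) = cmp GG w a" if "w \<in> Aut GG x" for w
    using asc_conj_gam_gam[OF x g G.inv_closed[OF g] that] gam_one[OF x that] g unfolding a_def by simp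
  fix u v assume u: "u \<in> Aut GG x" and v: "v \<in> Aut GG x" and "gam GG g u = gam GG g v"
  then have "cmp GG u a = cmp GG v a" using conj[OF u] conj[OF v] by simp
  then show "u = v" using A.right_cancel[of a u v] a u v by simp
qed

lemma gam_onto:
  assumes x: "x \<in> carrier (obj GG)" and g: "g \<in> carrier (obj GG)"
  shows "Aut GG (x \<otimes>\<^bsub>obj GG\<^esub> g) \<subseteq> gam GG g ` Aut GG x"
proof
  interpret G: group "obj GG" by (rule obj_group)
  define y where "y = x \<otimes>\<^bsub>obj GG\<^esub> g"
  define h where "h = inv\<^bsub>obj GG\<^esub> g"
  have y: "y \<in> carrier (obj GG)" and h: "h \<in> carrier (obj GG)" using x g unfolding y_def h_def by simp_all
  interpret A: group "aut_group GG y" by (rule aut_group_is_group[OF y])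
  define a where "a = asc GG y h g"
  have a: "a \<in> Aut GG y"
    using asc_closed[OF y h g] x g unfolding a_def y_def h_def by (simp add: G.m_assoc)
  fix w assume w: "w \<in> Aut GG y"
  define v where "v = cmp GG a (cmp GG w (inv\<^bsub>aut_group GG y\<^esub> a))"
  have v: "v \<in> Aut GG y" using a w unfolding v_def by (simp add: A.m_closed[simplified] A.inv_closed[simplified])
  have u: "gam GG h v \<in> Aut GG x"
    using gam_closed[OF y h v] x g unfolding y_def h_def by (simp add: G.m_assoc)
  have "cmp GG a (gam GG g (gam GG h v)) = cmp GG v a"
    using asc_conj_gam_gam[OF y h g v] gam_one[OF y v] g unfolding a_def h_def by simp
  also have "\<dots> = cmp GG a w"
    using a w unfolding v_def
    by (simp add: A.m_assoc[simplified] A.m_closed[simplified] A.inv_closed[simplified]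
        A.l_inv[simplified] A.r_one[simplified])
  finally have "gam GG g (gam GG h v) = w"
    using A.Units_l_cancel[simplified A.Units_eq] a w gam_closed[OF x g u] unfolding y_def by simp
  with u show "w \<in> gam GG g ` Aut GG x" by blast
qed

lemma bij_betw_gam:
  assumes "x \<in> carrier (obj GG)" and "g \<in> carrier (obj GG)"
  shows "bij_betw (gam GG g) (Aut GG x) (Aut GG (x \<otimes>\<^bsub>obj GG\<^esub> g))"
  unfolding bij_betw_def using assms gam_inj_on gam_onto gam_closed by blast

lemma alpha_in_pi1:
  assumes "g1 \<in> carrier (obj GG)" "g2 \<in> carrier (obj GG)" "g3 \<in> carrier (obj GG)"
  shows "alpha GG g1 g2 g3 \<in> pi1 GG"
proof -
  interpret G: group "obj GG" by (rule obj_group)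
  let ?g = "g1 \<otimes>\<^bsub>obj GG\<^esub> g2 \<otimes>\<^bsub>obj GG\<^esub> g3"
  have "bij_betw (gam_inv GG ?g) (Aut GG ?g) (pi1 GG)"
    using bij_betw_the_inv_into[OF bij_betw_gam[of "e2 GG" ?g]] assms unfolding gam_inv_def by simp
  then show ?thesis
    using asc_closed[OF assms] unfolding alpha_def by (blast dest: bij_betwE)
qed

end

lemma perm_rep_inv_in:
  "\<lbrakk>perm_rep G n \<rho>; g \<in> carrier G; i \<in> {1..n}\<rbrakk> \<Longrightarrow> Hilbert_Choice.inv (\<rho> g) i \<in> {1..n}"
  unfolding perm_rep_def by (meson permutes_in_image permutes_inv)

lemma perm_rep_inv_mult:
  "\<lbrakk>perm_rep G n \<rho>; g \<in> carrier G; h \<in> carrier G\<rbrakk>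
    \<Longrightarrow> Hilbert_Choice.inv (\<rho> (g \<otimes>\<^bsub>G\<^esub> h)) i = Hilbert_Choice.inv (\<rho> h) (Hilbert_Choice.inv (\<rho> g) i)"
  unfolding perm_rep_def by (metis o_inv_distrib permutes_bij comp_apply)

lemma cob2_mult:
  "cob2 G (vact \<rho>) (\<lambda>g1 g2 i. c g1 g2 i * d g1 g2 i) g1 g2 g3 i
    = cob2 G (vact \<rho>) c g1 g2 g3 i * cob2 G (vact \<rho>) d g1 g2 g3 i"
  unfolding cob2_def vact_def by (simp add: divide_inverse mult_ac)

lemma cob1_nonzero:
  assumes "monoid G" "perm_rep G n \<rho>" "cochain1 G {1..n} x"
    and "g1 \<in> carrier G" "g2 \<in> carrier G" "i \<in> {1..n}"
  shows "cob1 G (vact \<rho>) x g1 g2 i \<noteq> 0"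
  using assms perm_rep_inv_in[OF assms(2,4,6)] monoid.m_closed[OF assms(1,4,5)]
  unfolding cob1_def vact_def cochain1_def units_on_def by simp

lemma cob2_cob1:
  assumes G: "monoid G" and \<rho>: "perm_rep G n \<rho>" and x: "cochain1 G {1..n} x"
    and g: "g1 \<in> carrier G" "g2 \<in> carrier G" "g3 \<in> carrier G" and i: "i \<in> {1..n}"
  shows "cob2 G (vact \<rho>) (cob1 G (vact \<rho>) x) g1 g2 g3 i = 1"
proof -
  interpret G: monoid G by (rule G)
  define j where "j = Hilbert_Choice.inv (\<rho> g1) i"
  define k where "k = Hilbert_Choice.inv (\<rho> g2) j"
  have j: "j \<in> {1..n}" and k: "k \<in> {1..n}"
    using perm_rep_inv_in[OF \<rho>] g i unfolding j_def k_def by blast+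
  have g12: "Hilbert_Choice.inv (\<rho> (g1 \<otimes>\<^bsub>G\<^esub> g2)) i = k"
    using perm_rep_inv_mult[OF \<rho> g(1,2)] unfolding j_def k_def by simp
  have "x g h \<noteq> 0" if "g \<in> carrier G" "h \<in> {1..n}" for g h
    using x that unfolding cochain1_def units_on_def by blast
  then have "x g3 k \<noteq> 0" "x g2 j \<noteq> 0" "x g1 i \<noteq> 0" "x (g2 \<otimes>\<^bsub>G\<^esub> g3) j \<noteq> 0"
    "x (g1 \<otimes>\<^bsub>G\<^esub> g2) i \<noteq> 0" "x (g1 \<otimes>\<^bsub>G\<^esub> (g2 \<otimes>\<^bsub>G\<^esub> g3)) i \<noteq> 0"
    using g i j k by simp_all
  then show ?thesis
    unfolding cob2_def cob1_def vact_def j_def[symmetric] k_def[symmetric] g12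
    using g by (simp add: G.m_assoc field_simps)
qed

text \<open>The part of admissibility that the argument uses.\<close>
definition trivializes :: "('g, 'm) two_group \<Rightarrow> nat \<Rightarrow> ('g \<Rightarrow> nat \<Rightarrow> nat)
    \<Rightarrow> ('m \<Rightarrow> nat \<Rightarrow> complex) \<Rightarrow> ('g \<Rightarrow> 'g \<Rightarrow> nat \<Rightarrow> complex) \<Rightarrow> bool" where
  "trivializes GG n \<rho> \<beta> c \<longleftrightarrow> cochain2 (pi0 GG) {1..n} c \<and>
     (\<forall>g1\<in>carrier (pi0 GG). \<forall>g2\<in>carrier (pi0 GG). \<forall>g3\<in>carrier (pi0 GG).
        eq_on {1..n} (cob2 (pi0 GG) (vact \<rho>) c g1 g2 g3) (\<beta> (alpha GG g1 g2 g3)))"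

lemma
  assumes "admissible GG n \<rho> \<beta> c"
  shows admissible_perm_rep: "perm_rep (pi0 GG) n \<rho>"
    and admissible_module_hom: "module_hom GG n \<rho> \<beta>"
    and admissible_trivializes: "trivializes GG n \<rho> \<beta> c"
  by (use assms in \<open>simp add: admissible_def trivializes_def normalized_cochain2_def\<close>)+

lemma trivializes_mult_cob1:
  assumes G: "monoid (pi0 GG)" and \<rho>: "perm_rep (pi0 GG) n \<rho>" and x: "cochain1 (pi0 GG) {1..n} x"
    and c: "trivializes GG n \<rho> \<beta> c"
  shows "trivializes GG n \<rho> \<beta> (\<lambda>g1 g2 i. c g1 g2 i * cob1 (pi0 GG) (vact \<rho>) x g1 g2 i)"
  using c cob1_nonzero[OF G \<rho> x] cob2_cob1[OF G \<rho> x]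
  unfolding trivializes_def cochain2_def units_on_def eq_on_def cob2_mult by simp

lemma Iset_beta_eq: "\<lbrakk>(i', i) \<in> Iset GG n' n \<beta> \<beta>'; u \<in> pi1 GG\<rbrakk> \<Longrightarrow> \<beta>' u i' = \<beta> u i"
  unfolding Iset_def by (metis (mono_tags, lifting) case_prodD mem_Collect_eq restrict_apply')

lemma Iset_subset_Mset: "Iset GG n' n \<beta> \<beta>' \<subseteq> Mset n' n"
  unfolding Iset_def by blast

lemma cob2_zO:
  "cob2 G (orbit_act \<rho> \<rho>') (zO c c') g1 g2 g3 (i', i)
    = cob2 G (vact \<rho>') c' g1 g2 g3 i' / cob2 G (vact \<rho>) c g1 g2 g3 i"
  unfolding cob2_def orbit_act_def zO_def ract_def vact_def
  by (simp add: divide_inverse mult_ac)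

lemma zO_in_Z2:
  assumes special: "special_2group GG" and \<beta>: "module_hom GG n \<rho> \<beta>"
    and c: "trivializes GG n \<rho> \<beta> c" and c': "trivializes GG n' \<rho>' \<beta>' c'"
    and Orb: "Orb \<subseteq> Iset GG n' n \<beta> \<beta>'"
  shows "zO c c' \<in> Z2 (pi0 GG) Orb (orbit_act \<rho> \<rho>')"
proof -
  have in_M: "i' \<in> {1..n'} \<and> i \<in> {1..n}" if "(i', i) \<in> Orb" for i' i
    using Orb Iset_subset_Mset that unfolding Mset_def by blast
  have "cochain2 (pi0 GG) Orb (zO c c')"
    unfolding cochain2_def units_on_def
  proof (intro ballI)
    fix g1 g2 p assume g: "g1 \<in> carrier (pi0 GG)" "g2 \<in> carrier (pi0 GG)" and "p \<in> Orb"
    then obtain i' i where p: "p = (i', i)" and i: "i' \<in> {1..n'}" "i \<in> {1..n}"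
      using in_M by (cases p) blast
    have "c' g1 g2 i' \<noteq> 0" "c g1 g2 i \<noteq> 0"
      using c c' g i unfolding trivializes_def cochain2_def units_on_def by blast+
    then show "zO c c' g1 g2 p \<noteq> 0" unfolding p zO_def by simp
  qed
  moreover have "cob2 (pi0 GG) (orbit_act \<rho> \<rho>') (zO c c') g1 g2 g3 (i', i) = 1"
    if g: "g1 \<in> carrier (pi0 GG)" "g2 \<in> carrier (pi0 GG)" "g3 \<in> carrier (pi0 GG)"
      and p: "(i', i) \<in> Orb" for g1 g2 g3 i' i
  proof -
    have i: "i' \<in> {1..n'}" "i \<in> {1..n}" using in_M[OF p] by simp_all
    have a: "alpha GG g1 g2 g3 \<in> pi1 GG" by (rule alpha_in_pi1[OF special g])
    have c_alpha: "cob2 (pi0 GG) (vact \<rho>) c g1 g2 g3 i = \<beta> (alpha GG g1 g2 g3) i"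
      using c g i unfolding trivializes_def eq_on_def by blast
    have "cob2 (pi0 GG) (vact \<rho>') c' g1 g2 g3 i' = \<beta>' (alpha GG g1 g2 g3) i'"
      using c' g i unfolding trivializes_def eq_on_def by blast
    also have "\<dots> = \<beta> (alpha GG g1 g2 g3) i" using Iset_beta_eq[OF subsetD[OF Orb p] a] .
    finally have c'_alpha: "cob2 (pi0 GG) (vact \<rho>') c' g1 g2 g3 i' = \<beta> (alpha GG g1 g2 g3) i" .
    have "\<beta> (alpha GG g1 g2 g3) i \<noteq> 0"
      using \<beta> a i unfolding module_hom_def units_on_def by blast
    then show ?thesis unfolding cob2_zO c_alpha c'_alpha by simp
  qed
  ultimately show ?thesis unfolding Z2_def eq_on_def by auto
qed

lemma zO_mult_cob1:
  "zO (\<lambda>g1 g2 i. c g1 g2 i * cob1 G (vact \<rho>) x g1 g2 i)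
      (\<lambda>g1 g2 i. c' g1 g2 i * cob1 G (vact \<rho>') x' g1 g2 i) g1 g2 (i', i)
    = zO c c' g1 g2 (i', i) * cob1 G (orbit_act \<rho> \<rho>') (\<lambda>g (j', j). x' g j' / x g j) g1 g2 (i', i)"
  unfolding cob1_def orbit_act_def zO_def ract_def vact_def
  by (simp add: divide_inverse mult_ac)

lemma cohomologous2_zO_mult_cob1:
  assumes Orb: "Orb \<subseteq> Mset n' n"
    and x: "cochain1 G {1..n} x" and x': "cochain1 G {1..n'} x'"
  shows "cohomologous2 G Orb (orbit_act \<rho> \<rho>') (zO c c')
    (zO (\<lambda>g1 g2 i. c g1 g2 i * cob1 G (vact \<rho>) x g1 g2 i)
        (\<lambda>g1 g2 i. c' g1 g2 i * cob1 G (vact \<rho>') x' g1 g2 i))"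
  unfolding cohomologous2_def
proof (intro exI[where x = "\<lambda>g (j', j). x' g j' / x g j"] conjI)
  show "cochain1 G Orb (\<lambda>g (j', j). x' g j' / x g j)"
    using Orb x x' unfolding cochain1_def units_on_def Mset_def by auto
qed (auto simp: eq_on_def zO_mult_cob1)

theorem mainTheorem9:
  fixes GG :: "('g, 'm) two_group"
    and n n' :: nat and \<rho> \<rho>' :: "'g \<Rightarrow> nat \<Rightarrow> nat"
    and \<beta> \<beta>' :: "'m \<Rightarrow> nat \<Rightarrow> complex"
    and c c' :: "'g \<Rightarrow> 'g \<Rightarrow> nat \<Rightarrow> complex"
    and Orb :: "(nat \<times> nat) set"
  assumes "special_2group GG"
    and "admissible GG n \<rho> \<beta> c"
    and "admissible GG n' \<rho>' \<beta>' c'"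
    and "is_orbit (pi0 GG) n' n \<rho> \<rho>' Orb"
    and "Orb \<subseteq> Iset GG n' n \<beta> \<beta>'"
  shows "zO c c' \<in> Z2 (pi0 GG) Orb (orbit_act \<rho> \<rho>')
     \<and> (\<forall>x x'. normalized_cochain1 (pi0 GG) {1..n} x \<longrightarrow>
               normalized_cochain1 (pi0 GG) {1..n'} x' \<longrightarrow>
          (let ct = (\<lambda>g1 g2 i. c g1 g2 i * cob1 (pi0 GG) (vact \<rho>) x g1 g2 i);
               ct' = (\<lambda>g1 g2 i. c' g1 g2 i * cob1 (pi0 GG) (vact \<rho>') x' g1 g2 i)
           in zO ct ct' \<in> Z2 (pi0 GG) Orb (orbit_act \<rho> \<rho>') \<and>
              cohomologous2 (pi0 GG) Orb (orbit_act \<rho> \<rho>') (zO c c') (zO ct ct')))"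
proof -
  note special = assms(1) and Orb = assms(5)
  have G: "monoid (pi0 GG)" using obj_group[OF special] by (rule group.is_monoid)
  note \<beta> = admissible_module_hom[OF assms(2)]
  note \<rho> = admissible_perm_rep[OF assms(2)] and \<rho>' = admissible_perm_rep[OF assms(3)]
  note c = admissible_trivializes[OF assms(2)] and c' = admissible_trivializes[OF assms(3)]
  show ?thesis unfolding Let_def
  proof (intro conjI allI impI zO_in_Z2[OF special \<beta> c c' Orb])
    fix x x' assume "normalized_cochain1 (pi0 GG) {1..n} x" "normalized_cochain1 (pi0 GG) {1..n'} x'"
    then have x: "cochain1 (pi0 GG) {1..n} x" and x': "cochain1 (pi0 GG) {1..n'} x'"
      unfolding normalized_cochain1_def by simp_all
    show "zO (\<lambda>g1 g2 i. c g1 g2 i * cob1 (pi0 GG) (vact \<rho>) x g1 g2 i)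
             (\<lambda>g1 g2 i. c' g1 g2 i * cob1 (pi0 GG) (vact \<rho>') x' g1 g2 i)
          \<in> Z2 (pi0 GG) Orb (orbit_act \<rho> \<rho>')"
      using trivializes_mult_cob1[OF G \<rho> x c] trivializes_mult_cob1[OF G \<rho>' x' c']
      by (rule zO_in_Z2[OF special \<beta> _ _ Orb])
    show "cohomologous2 (pi0 GG) Orb (orbit_act \<rho> \<rho>') (zO c c')
        (zO (\<lambda>g1 g2 i. c g1 g2 i * cob1 (pi0 GG) (vact \<rho>) x g1 g2 i)
            (\<lambda>g1 g2 i. c' g1 g2 i * cob1 (pi0 GG) (vact \<rho>') x' g1 g2 i))"
      using Orb Iset_subset_Mset x x' by (blast intro: cohomologous2_zO_mult_cob1)
  qed
qed

end
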